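(* Let $0<\sigma\le 1$ and let $(u,m)$ be the classical solution of the system \[ \begin{cases} u_t + \frac{\sigma^2}{2} u_{xx} - ru + G(u_x,m)^2 = 0, & 0<t<T,\ 0<x<L,\\ m_t - \frac{\sigma^2}{2} m_{xx} - \{G(u_x,m)m\}_x = 0, & 0<t<T,\ 0<x<L,\\ m(0,x)=m_0(x),\quad u(T,x)=u_T(x), & 0\le x\le L,\\ u_x(t,0)=u_x(t,L)=0, & 0\le t\le T,\\ \frac{\sigma^2}{2} m_x(t,x) + G(u_x,m)m(t,x) = 0, & 0\le t\le T,\ x\in\{0,L\}, \end{cases} \] where $G(u_x,m)(t,x) := \frac12\left(b + c\int_0^L u_x(t,y)m(t,y)\,dy - u_x(t,x)\right)$. Then \[ \sigma^2\left(\int_0^T\!\!\int_0^L \frac{|m_x|^2}{m+1}\,dx\,dt\right)^{1/2}\le C, \] where $C$ does not depend on $\sigma$.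
   Context: Standing setting: $L,T,r>0$ are constants, $\epsilon>0$, and $b=\frac{2}{2+\epsilon}$, $c=\frac{\epsilon}{2+\epsilon}$. The data satisfy: $u_T,m_0\in C^{2+\gamma}([0,L])$ for some $\gamma>0$; $u_T'(0)=u_T'(L)=0$ and $m_0(0)=m_0'(0)=m_0(L)=m_0'(L)=0$; $m_0$ is a probability density on $[0,L]$; $u_T\ge 0$. Constants may depend on $u_T,m_0,L,T,r,\epsilon$ but not on $\sigma\in(0,1]$. *)

theory Defs
  imports "HOL-Analysis.Analysis"
begin

definition bcoef :: "real \<Rightarrow> real" where "bcoef \<epsilon> = 2 / (2 + \<epsilon>)"
definition ccoef :: "real \<Rightarrow> real" where "ccoef \<epsilon> = \<epsilon> / (2 + \<epsilon>)"

definition C2gamma :: "real \<Rightarrow> real \<Rightarrow> (real \<Rightarrow> real) \<Rightarrow> bool" where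
  "C2gamma L \<gamma> f \<longleftrightarrow> (\<exists>f1 f2 H.
     (\<forall>x\<in>{0..L}. (f has_real_derivative f1 x) (at x within {0..L}))
   \<and> (\<forall>x\<in>{0..L}. (f1 has_real_derivative f2 x) (at x within {0..L}))
   \<and> continuous_on {0..L} f2
   \<and> (\<forall>x\<in>{0..L}. \<forall>y\<in>{0..L}. \<bar>f2 x - f2 y\<bar> \<le> H * \<bar>x - y\<bar> powr \<gamma>))"

definition Gterm :: "real \<Rightarrow> real \<Rightarrow> (real \<Rightarrow> real \<Rightarrow> real) \<Rightarrow> (real \<Rightarrow> real \<Rightarrow> real)
    \<Rightarrow> real \<Rightarrow> real \<Rightarrow> real" where
  "Gterm \<epsilon> L ux m t x =
     (1/2) * (bcoef \<epsilon> + ccoef \<epsilon> * integral {0..L} (\<lambda>y. ux t y * m t y) - ux t x)"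

definition classical_solution ::
  "real \<Rightarrow> real \<Rightarrow> real \<Rightarrow> real \<Rightarrow> real \<Rightarrow> (real \<Rightarrow> real) \<Rightarrow> (real \<Rightarrow> real)
   \<Rightarrow> (real \<Rightarrow> real \<Rightarrow> real) \<Rightarrow> (real \<Rightarrow> real \<Rightarrow> real) \<Rightarrow> bool" where
  "classical_solution L T r \<epsilon> \<sigma> uT m0 u m \<longleftrightarrow>
   (\<exists>ut ux uxx mt mx mxx.
      (\<forall>t\<in>{0..T}. \<forall>x\<in>{0..L}.
          ((\<lambda>s. u s x) has_real_derivative ut t x) (at t within {0..T})
        \<and> ((\<lambda>y. u t y) has_real_derivative ux t x) (at x within {0..L})
        \<and> ((\<lambda>y. ux t y) has_real_derivative uxx t x) (at x within {0..L})
        \<and> ((\<lambda>s. m s x) has_real_derivative mt t x) (at t within {0..T})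
        \<and> ((\<lambda>y. m t y) has_real_derivative mx t x) (at x within {0..L})
        \<and> ((\<lambda>y. mx t y) has_real_derivative mxx t x) (at x within {0..L}))
    \<and> continuous_on ({0..T} \<times> {0..L}) (\<lambda>(t,x). u t x)
    \<and> continuous_on ({0..T} \<times> {0..L}) (\<lambda>(t,x). ut t x)
    \<and> continuous_on ({0..T} \<times> {0..L}) (\<lambda>(t,x). ux t x)
    \<and> continuous_on ({0..T} \<times> {0..L}) (\<lambda>(t,x). uxx t x)
    \<and> continuous_on ({0..T} \<times> {0..L}) (\<lambda>(t,x). m t x)
    \<and> continuous_on ({0..T} \<times> {0..L}) (\<lambda>(t,x). mt t x)
    \<and> continuous_on ({0..T} \<times> {0..L}) (\<lambda>(t,x). mx t x)
    \<and> continuous_on ({0..T} \<times> {0..L}) (\<lambda>(t,x). mxx t x)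
    \<and> (\<forall>t\<in>{0<..<T}. \<forall>x\<in>{0<..<L}.
          ut t x + \<sigma>\<^sup>2 / 2 * uxx t x - r * u t x + (Gterm \<epsilon> L ux m t x)\<^sup>2 = 0)
    \<and> (\<forall>t\<in>{0<..<T}. \<forall>x\<in>{0<..<L}.
          ((\<lambda>y. Gterm \<epsilon> L ux m t y * m t y) has_real_derivative
              (mt t x - \<sigma>\<^sup>2 / 2 * mxx t x)) (at x))
    \<and> (\<forall>x\<in>{0..L}. m 0 x = m0 x \<and> u T x = uT x)
    \<and> (\<forall>t\<in>{0..T}. ux t 0 = 0 \<and> ux t L = 0)
    \<and> (\<forall>t\<in>{0..T}. \<forall>x\<in>{0, L}. \<sigma>\<^sup>2 / 2 * mx t x + Gterm \<epsilon> L ux m t x * m t x = 0))"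


end

theory Submission
  imports Defs
begin

text \<open>
  The estimate comes from the entropy \<open>\<integral> \<Phi>(m)\<close> with \<open>\<Phi>(z) = (z+1) ln(z+1) - z\<close>. Testing the
  Fokker-Planck equation with \<open>ln(m+1)\<close> and integrating by parts against the flux
  \<open>J = \<sigma>\<^sup>2/2 m\<^sub>x + G m\<close>, which vanishes at \<open>x = 0, L\<close>, Young's inequality gives
  \<open>d/dt \<integral> \<Phi>(m) \<le> - \<sigma>\<^sup>2/4 \<integral> m\<^sub>x\<^sup>2/(m+1) + \<sigma>\<^sup>-\<^sup>2 \<integral> G\<^sup>2 m\<close>.
  The cost \<open>\<integral>\<integral> G\<^sup>2 m\<close> is bounded independently of \<open>\<sigma>\<close> by duality: testing the two equations
  against each other gives \<open>d/dt \<integral> u m = r \<integral> u m + \<integral> G\<^sup>2 m - \<beta> \<integral> G m\<close>, where \<open>\<beta>\<close> is the mean-field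
  part of \<open>2G\<close>, and the self-consistency of \<open>\<beta>\<close> forces \<open>\<beta> \<integral> G m \<le> \<integral> G m\<close>. This needs \<open>u, m \<ge> 0\<close>
  and conservation of mass; the signs follow from energy estimates for the fourth power of the
  negative parts. Multiplying the entropy inequality by \<open>\<sigma>\<^sup>2\<close> then bounds \<open>\<sigma>\<^sup>4 \<integral>\<integral> m\<^sub>x\<^sup>2/(m+1)\<close>.
\<close>

lemma continuous_on_slice:
  assumes "continuous_on (A \<times> B) (\<lambda>(t, x). f t x)" "t \<in> A"
  shows "continuous_on B (f t)"
  using continuous_on_compose2[OF assms(1) continuous_on_Pair[OF continuous_on_const continuous_on_id]]
    assms(2)
  by auto

lemma continuous_on_integral_slice:
  fixes f :: "real \<Rightarrow> real \<Rightarrow> real"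
  assumes "continuous_on (U \<times> {a..b}) (\<lambda>(t, x). f t x)"
  shows "continuous_on U (\<lambda>t. integral {a..b} (f t))"
  using integral_continuous_on_param[of U a b f] assms by simp

lemma has_real_derivative_integral_slice:
  fixes f f' :: "real \<Rightarrow> real \<Rightarrow> real"
  assumes "\<And>t x. t \<in> {a..b} \<Longrightarrow> x \<in> {c..d} \<Longrightarrow>
      ((\<lambda>s. f s x) has_real_derivative f' t x) (at t within {a..b})"
    and "continuous_on ({a..b} \<times> {c..d}) (\<lambda>(t, x). f t x)"
    and "continuous_on ({a..b} \<times> {c..d}) (\<lambda>(t, x). f' t x)"
    and "t \<in> {a..b}"
  shows "((\<lambda>t. integral {c..d} (f t)) has_real_derivative integral {c..d} (f' t)) (at t within {a..b})"
  using leibniz_rule_field_derivative[of "{a..b}" c d f f' t] assms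
    integrable_continuous_interval[OF continuous_on_slice[OF assms(2)]]
  by simp

lemma integration_by_parts_vanishing_boundary:
  fixes f g f' g' :: "real \<Rightarrow> real"
  assumes "a \<le> b" "continuous_on {a..b} f" "continuous_on {a..b} g"
    and "\<And>x. x \<in> {a<..<b} \<Longrightarrow> (f has_real_derivative f' x) (at x)"
    and "\<And>x. x \<in> {a<..<b} \<Longrightarrow> (g has_real_derivative g' x) (at x)"
    and "continuous_on {a..b} (\<lambda>x. f x * g' x)"
    and "f a * g a = 0" "f b * g b = 0"
  shows "((\<lambda>x. f' x * g x) has_integral - integral {a..b} (\<lambda>x. f x * g' x)) {a..b}"
proof -
  have "((\<lambda>x. f x * g' x) has_integral f b * g b - f a * g a - - integral {a..b} (\<lambda>x. f x * g' x))
      {a..b}"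
    unfolding assms(7,8) using integrable_continuous_interval[OF assms(6)]
    by (simp add: has_integral_integral)
  moreover have "\<And>x. x \<in> {a<..<b} \<Longrightarrow> (f has_vector_derivative f' x) (at x)"
    and "\<And>x. x \<in> {a<..<b} \<Longrightarrow> (g has_vector_derivative g' x) (at x)"
    using assms(4,5) by (simp_all add: has_real_derivative_iff_has_vector_derivative)
  ultimately show ?thesis
    by (rule integration_by_parts_interior[OF bounded_bilinear_mult assms(1-3), rotated 2])
qed

lemma has_integral_cong_interior:
  fixes f g :: "real \<Rightarrow> real"
  assumes "(f has_integral I) {a..b}" "\<And>x. x \<in> {a<..<b} \<Longrightarrow> g x = f x"
  shows "(g has_integral I) {a..b}"
  by (rule has_integral_spike_finite[of "{a, b}"]) (use assms in auto)

lemma continuous_le_on_Icc_from_Ioo: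
  fixes f g :: "real \<Rightarrow> real"
  assumes "continuous_on {a..b} f" "continuous_on {a..b} g" "a < b"
    and "\<And>x. x \<in> {a<..<b} \<Longrightarrow> f x \<le> g x" "x \<in> {a..b}"
  shows "f x \<le> g x"
  using continuous_le_on_closure[of "{a<..<b}" "\<lambda>x. f x - g x" x 0] assms
  by (simp add: continuous_on_diff)

lemma continuous_on_compact_bound:
  fixes f :: "'a::topological_space \<Rightarrow> real"
  assumes "compact S" "continuous_on S f"
  obtains K where "\<And>x. x \<in> S \<Longrightarrow> \<bar>f x\<bar> \<le> K"
  using compact_imp_bounded[OF compact_continuous_image[OF assms(2,1)]]
  by (auto simp: bounded_iff)

lemma gronwall_Icc:
  fixes F F' :: "real \<Rightarrow> real"
  assumes "continuous_on {0..T} F"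
    and "\<And>t. t \<in> {0<..<T} \<Longrightarrow> (F has_real_derivative F' t) (at t)"
    and "\<And>t. t \<in> {0<..<T} \<Longrightarrow> F' t \<le> K * F t"
    and t: "t \<in> {0..T}"
  shows "F t \<le> exp (K * t) * F 0"
proof -
  define H where "H s = exp (- K * s) * F s" for s
  have "H t \<le> H 0"
  proof (rule DERIV_nonpos_imp_decreasing_open[of 0 t H])
    show "0 \<le> t" using t by simp
    show "continuous_on {0..t} H"
      unfolding H_def using t by (intro continuous_intros continuous_on_subset[OF assms(1)]) auto
    fix s assume "0 < s" "s < t"
    then have s: "s \<in> {0<..<T}" using t by auto
    have "(H has_real_derivative exp (- K * s) * (F' s - K * F s)) (at s)"
      unfolding H_def[abs_def] using assms(2)[OF s]
      by (auto intro!: derivative_eq_intros simp: algebra_simps)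
    moreover have "exp (- K * s) * (F' s - K * F s) \<le> 0"
      using assms(3)[OF s] by (simp add: mult_nonneg_nonpos)
    ultimately show "\<exists>y. (H has_real_derivative y) (at s) \<and> y \<le> 0" by blast
  qed
  then have "exp (K * t) * H t \<le> exp (K * t) * H 0" by simp
  then show ?thesis by (simp add: H_def mult.assoc[symmetric] mult_exp_exp)
qed

definition neg_pow :: "nat \<Rightarrow> real \<Rightarrow> real" where
  "neg_pow n z = (min z 0) ^ n"

lemma continuous_on_neg_pow [continuous_intros]:
  "continuous_on S f \<Longrightarrow> continuous_on S (\<lambda>x. neg_pow n (f x))"
  unfolding neg_pow_def by (intro continuous_intros)

lemma neg_pow_eq_0_iff: "0 < n \<Longrightarrow> neg_pow n z = 0 \<longleftrightarrow> 0 \<le> z"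
  by (auto simp: neg_pow_def min_def)

lemma neg_pow_even_nonneg: "even n \<Longrightarrow> 0 \<le> neg_pow n z"
  by (simp add: neg_pow_def zero_le_even_power)

lemma neg_pow_odd_nonpos: "odd n \<Longrightarrow> neg_pow n z \<le> 0"
  by (auto simp: neg_pow_def power_le_zero_eq odd_pos)

lemma neg_pow_mult_self: "0 < n \<Longrightarrow> neg_pow n z * z = neg_pow (Suc n) z"
  by (auto simp: neg_pow_def min_def)

lemma neg_pow_has_real_derivative_at_0:
  assumes "2 \<le> n"
  shows "(neg_pow n has_real_derivative 0) (at 0)"
proof -
  have "((\<lambda>h. (neg_pow n (0 + h) - neg_pow n 0) / h) \<longlongrightarrow> 0) (at 0)"
  proof (rule Lim_null_comparison)
    show "\<forall>\<^sub>F h in at 0. norm ((neg_pow n (0 + h) - neg_pow n 0) / h) \<le> \<bar>h\<bar> ^ (n - 1)"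
    proof (rule always_eventually, intro allI)
      fix h :: real
      show "norm ((neg_pow n (0 + h) - neg_pow n 0) / h) \<le> \<bar>h\<bar> ^ (n - 1)"
      proof (cases "h < 0")
        case True
        have "h ^ n = h * h ^ (n - 1)"
          using assms by (metis Suc_diff_1 less_le_trans pos2 power_Suc)
        then have "(neg_pow n (0 + h) - neg_pow n 0) / h = h ^ (n - 1)"
          using True assms by (simp add: neg_pow_def min_def power_0_left)
        then show ?thesis by (simp add: power_abs)
      qed (use assms in \<open>simp add: neg_pow_def min_def\<close>)
    qed
    have "((\<lambda>h::real. \<bar>h\<bar> ^ (n - 1)) \<longlongrightarrow> \<bar>0\<bar> ^ (n - 1)) (at 0)"
      by (intro tendsto_intros)
    moreover have "\<bar>0::real\<bar> ^ (n - 1) = 0" using assms by simp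
    ultimately show "((\<lambda>h::real. \<bar>h\<bar> ^ (n - 1)) \<longlongrightarrow> 0) (at 0)"
      by (rule back_subst)
  qed
  then show ?thesis by (simp add: DERIV_def)
qed

lemma neg_pow_has_real_derivative:
  assumes "2 \<le> n"
  shows "(neg_pow n has_real_derivative of_nat n * neg_pow (n - 1) z) (at z)"
proof -
  consider "z < 0" | "z > 0" | "z = 0" by linarith
  then show ?thesis
  proof cases
    case 1
    have "((\<lambda>z. z ^ n) has_real_derivative of_nat n * neg_pow (n - 1) z) (at z)"
      using 1 by (auto intro!: derivative_eq_intros simp: neg_pow_def)
    then show ?thesis
      by (rule has_field_derivative_transform_within_open[where S="{..<0}"])
        (use 1 in \<open>auto simp: neg_pow_def\<close>)
  next
    case 2
    have "neg_pow (n - 1) z = 0" using 2 assms by (intro neg_pow_eq_0_iff[THEN iffD2]) auto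
    then have "((\<lambda>z. 0) has_real_derivative of_nat n * neg_pow (n - 1) z) (at z)" by simp
    then show ?thesis
      by (rule has_field_derivative_transform_within_open[where S="{0<..}"])
        (use 2 assms in \<open>auto simp: neg_pow_eq_0_iff\<close>)
  next
    case 3
    moreover have "neg_pow (n - 1) 0 = 0" using assms by (intro neg_pow_eq_0_iff[THEN iffD2]) auto
    ultimately show ?thesis using neg_pow_has_real_derivative_at_0[OF assms] by simp
  qed
qed

lemma has_real_derivative_neg_pow:
  assumes "2 \<le> n" "(f has_real_derivative f') (at x within S)"
  shows "((\<lambda>x. neg_pow n (f x)) has_real_derivative of_nat n * neg_pow (n - 1) (f x) * f')
    (at x within S)"
  using DERIV_chain2[OF neg_pow_has_real_derivative[OF assms(1)] assms(2)] by simp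

lemma has_real_derivative_neg_pow4:
  assumes "(f has_real_derivative f') (at x within S)"
  shows "((\<lambda>x. neg_pow 4 (f x)) has_real_derivative 4 * neg_pow 3 (f x) * f') (at x within S)"
  using has_real_derivative_neg_pow[OF _ assms, of 4] by simp

lemma has_real_derivative_4_neg_pow3:
  assumes "(f has_real_derivative f') (at x within S)"
  shows "((\<lambda>x. 4 * neg_pow 3 (f x)) has_real_derivative 12 * neg_pow 2 (f x) * f') (at x within S)"
  using DERIV_cmult[OF has_real_derivative_neg_pow[OF _ assms, of 3], of 4] by (simp add: mult.assoc)

lemma nonneg_if_integral_neg_pow_le_0:
  fixes f :: "real \<Rightarrow> real"
  assumes "continuous_on {a..b} f" "a < b" "integral {a..b} (\<lambda>x. neg_pow 4 (f x)) \<le> 0"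
    and "x \<in> {a..b}"
  shows "0 \<le> f x"
proof -
  have cont: "continuous_on {a..b} (\<lambda>x. neg_pow 4 (f x))"
    using assms(1) by (intro continuous_intros)
  have "0 \<le> integral {a..b} (\<lambda>x. neg_pow 4 (f x))"
    by (intro integral_nonneg integrable_continuous_interval cont) (simp add: neg_pow_even_nonneg)
  then have "((\<lambda>x. neg_pow 4 (f x)) has_integral 0) (cbox a b)"
    using assms(3) integrable_continuous_interval[OF cont] by (simp add: has_integral_integral)
  then have "neg_pow 4 (f x) = 0"
    by (rule has_integral_0_cbox_imp_0[rotated 2]) (use assms cont in \<open>auto simp: neg_pow_even_nonneg\<close>)
  then show ?thesis by (simp add: neg_pow_eq_0_iff)
qed

lemma neg_quadratic_le:
  fixes s a g :: real
  assumes "s > 0"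
  shows "- (s\<^sup>2 / 2 * a\<^sup>2 + g * a) \<le> g\<^sup>2 / (2 * s\<^sup>2)"
proof -
  have "0 \<le> (s * a + g / s)\<^sup>2 / 2" by simp
  also have "(s * a + g / s)\<^sup>2 / 2 = s\<^sup>2 / 2 * a\<^sup>2 + g * a + g\<^sup>2 / (2 * s\<^sup>2)"
    using assms by (simp add: power2_eq_square field_simps)
  finally show ?thesis by linarith
qed

lemma neg_quadratic_le_half:
  fixes s a g :: real
  assumes "s > 0"
  shows "- (s\<^sup>2 / 2 * a\<^sup>2 + g * a) \<le> - (s\<^sup>2 / 4 * a\<^sup>2) + g\<^sup>2 / s\<^sup>2"
proof -
  have "0 \<le> (s * a / 2 + g / s)\<^sup>2" by simp
  also have "(s * a / 2 + g / s)\<^sup>2 = s\<^sup>2 / 4 * a\<^sup>2 + g * a + g\<^sup>2 / s\<^sup>2"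
    using assms by (simp add: power2_eq_square field_simps)
  finally show ?thesis by linarith
qed

text \<open>
  In the next two lemmas \<open>s\<^sup>2/2 a + g z\<close> is the flux with \<open>z = m\<close>, \<open>a = m\<^sub>x\<close>, tested against
  the \<open>x\<close>-derivatives of \<open>4 neg_pow 3 m\<close> and of \<open>ln (m + 1)\<close>.
\<close>

lemma flux_neg_pow_test_le:
  fixes s a g z K :: real
  assumes "s > 0" "\<bar>g\<bar> \<le> K"
  shows "- ((s\<^sup>2 / 2 * a + g * z) * (12 * neg_pow 2 z * a)) \<le> 6 * K\<^sup>2 / s\<^sup>2 * neg_pow 4 z"
proof -
  have p: "0 \<le> neg_pow 2 z" by (simp add: neg_pow_even_nonneg)
  have "g\<^sup>2 \<le> K\<^sup>2" using assms(2) by (simp add: abs_le_square_iff[symmetric])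
  then have gz: "(g * z)\<^sup>2 \<le> K\<^sup>2 * z\<^sup>2" by (simp add: power_mult_distrib mult_right_mono)
  have "- ((s\<^sup>2 / 2 * a + g * z) * (12 * neg_pow 2 z * a))
      = 12 * neg_pow 2 z * (- (s\<^sup>2 / 2 * a\<^sup>2 + (g * z) * a))"
    by (simp add: power2_eq_square algebra_simps)
  also have "\<dots> \<le> 12 * neg_pow 2 z * ((g * z)\<^sup>2 / (2 * s\<^sup>2))"
    by (rule mult_left_mono[OF neg_quadratic_le[OF assms(1)]]) (use p in auto)
  also have "\<dots> \<le> 12 * neg_pow 2 z * (K\<^sup>2 * z\<^sup>2 / (2 * s\<^sup>2))"
    by (intro mult_left_mono divide_right_mono gz) (use p in auto)
  also have "\<dots> = 6 * K\<^sup>2 / s\<^sup>2 * (neg_pow 2 z * z * z)"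
    using assms(1) by (simp add: power2_eq_square field_simps)
  also have "\<dots> = 6 * K\<^sup>2 / s\<^sup>2 * neg_pow 4 z"
    by (simp add: neg_pow_mult_self numeral_eq_Suc)
  finally show ?thesis .
qed

lemma flux_log_test_le:
  fixes s a g z :: real
  assumes "s > 0" "0 \<le> z"
  shows "- ((s\<^sup>2 / 2 * a + g * z) * (a / (z + 1)))
    \<le> - (s\<^sup>2 / 4) * (a\<^sup>2 / (z + 1)) + g\<^sup>2 * z / s\<^sup>2"
proof -
  have pos: "z + 1 > 0" using assms(2) by simp
  have "- ((s\<^sup>2 / 2 * a + g * z) * (a / (z + 1))) = - (s\<^sup>2 / 2 * a\<^sup>2 + (g * z) * a) / (z + 1)"
    using pos by (simp add: power2_eq_square field_simps)
  also have "\<dots> \<le> (- (s\<^sup>2 / 4 * a\<^sup>2) + (g * z)\<^sup>2 / s\<^sup>2) / (z + 1)"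
    by (rule divide_right_mono[OF neg_quadratic_le_half[OF assms(1)]]) (use pos in auto)
  also have "\<dots> = - (s\<^sup>2 / 4) * (a\<^sup>2 / (z + 1)) + g\<^sup>2 * (z * (z / (z + 1))) / s\<^sup>2"
    using pos assms(1)
    by (simp add: diff_divide_distrib add_divide_distrib power_mult_distrib power2_eq_square
        algebra_simps)
  also have "\<dots> \<le> - (s\<^sup>2 / 4) * (a\<^sup>2 / (z + 1)) + g\<^sup>2 * z / s\<^sup>2"
  proof -
    have "z * (z / (z + 1)) \<le> z" using pos assms(2) by (simp add: field_simps)
    then have "g\<^sup>2 * (z * (z / (z + 1))) / s\<^sup>2 \<le> g\<^sup>2 * z / s\<^sup>2"
      by (intro divide_right_mono mult_left_mono) auto
    then show ?thesis by simp
  qed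
  finally show ?thesis .
qed

lemma neg_pow_hjb_source_nonneg:
  fixes r w g :: real
  assumes "r > 0"
  shows "0 \<le> 4 * neg_pow 3 w * (r * w - g\<^sup>2)"
proof (cases "w < 0")
  case True
  then have "r * w < 0" using assms by (simp add: mult_pos_neg)
  then have "r * w - g\<^sup>2 \<le> 0" using zero_le_power2[of g] by linarith
  then show ?thesis by (simp add: mult_nonpos_nonpos neg_pow_odd_nonpos)
next
  case False
  then have "neg_pow 3 w = 0" by (simp add: neg_pow_eq_0_iff)
  then show ?thesis by simp
qed

definition entropy_fun :: "real \<Rightarrow> real" where
  "entropy_fun z = (z + 1) * ln (z + 1) - z"

lemma entropy_fun_has_real_derivative:
  "z > -1 \<Longrightarrow> (entropy_fun has_real_derivative ln (z + 1)) (at z)"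
  unfolding entropy_fun_def[abs_def] by (auto intro!: derivative_eq_intros)

lemma entropy_fun_nonneg:
  assumes "0 \<le> z"
  shows "0 \<le> entropy_fun z"
proof -
  have "entropy_fun 0 \<le> entropy_fun z"
  proof (rule DERIV_nonneg_imp_increasing_open[of 0 z entropy_fun, OF assms])
    fix x :: real assume "0 < x" "x < z"
    then show "\<exists>y. (entropy_fun has_real_derivative y) (at x) \<and> 0 \<le> y"
      by (intro exI[of _ "ln (x + 1)"]) (auto intro: entropy_fun_has_real_derivative)
  next
    show "continuous_on {0..z} entropy_fun"
      unfolding entropy_fun_def by (intro continuous_intros) auto
  qed
  then show ?thesis by (simp add: entropy_fun_def)
qed

section \<open>Classical solutions\<close>

locale mfg_solution =
  fixes L T r \<epsilon> \<sigma> :: real and u m ut ux uxx mt mx mxx :: "real \<Rightarrow> real \<Rightarrow> real"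
    and uT m0 :: "real \<Rightarrow> real"
  assumes L: "L > 0" and T: "T > 0" and r: "r > 0" and eps: "\<epsilon> > 0" and sig: "\<sigma> > 0"
    and ut_deriv: "\<And>t x. t \<in> {0..T} \<Longrightarrow> x \<in> {0..L} \<Longrightarrow>
      ((\<lambda>s. u s x) has_real_derivative ut t x) (at t within {0..T})"
    and ux_deriv: "\<And>t x. t \<in> {0..T} \<Longrightarrow> x \<in> {0..L} \<Longrightarrow>
      ((\<lambda>y. u t y) has_real_derivative ux t x) (at x within {0..L})"
    and uxx_deriv: "\<And>t x. t \<in> {0..T} \<Longrightarrow> x \<in> {0..L} \<Longrightarrow>
      ((\<lambda>y. ux t y) has_real_derivative uxx t x) (at x within {0..L})"
    and mt_deriv: "\<And>t x. t \<in> {0..T} \<Longrightarrow> x \<in> {0..L} \<Longrightarrow>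
      ((\<lambda>s. m s x) has_real_derivative mt t x) (at t within {0..T})"
    and mx_deriv: "\<And>t x. t \<in> {0..T} \<Longrightarrow> x \<in> {0..L} \<Longrightarrow>
      ((\<lambda>y. m t y) has_real_derivative mx t x) (at x within {0..L})"
    and mxx_deriv: "\<And>t x. t \<in> {0..T} \<Longrightarrow> x \<in> {0..L} \<Longrightarrow>
      ((\<lambda>y. mx t y) has_real_derivative mxx t x) (at x within {0..L})"
    and u_cont: "continuous_on ({0..T} \<times> {0..L}) (\<lambda>(t, x). u t x)"
    and ut_cont: "continuous_on ({0..T} \<times> {0..L}) (\<lambda>(t, x). ut t x)"
    and ux_cont: "continuous_on ({0..T} \<times> {0..L}) (\<lambda>(t, x). ux t x)"
    and uxx_cont: "continuous_on ({0..T} \<times> {0..L}) (\<lambda>(t, x). uxx t x)"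
    and m_cont: "continuous_on ({0..T} \<times> {0..L}) (\<lambda>(t, x). m t x)"
    and mt_cont: "continuous_on ({0..T} \<times> {0..L}) (\<lambda>(t, x). mt t x)"
    and mx_cont: "continuous_on ({0..T} \<times> {0..L}) (\<lambda>(t, x). mx t x)"
    and mxx_cont: "continuous_on ({0..T} \<times> {0..L}) (\<lambda>(t, x). mxx t x)"
    and hjb: "\<And>t x. t \<in> {0<..<T} \<Longrightarrow> x \<in> {0<..<L} \<Longrightarrow>
      ut t x + \<sigma>\<^sup>2 / 2 * uxx t x - r * u t x + (Gterm \<epsilon> L ux m t x)\<^sup>2 = 0"
    and fokker_planck: "\<And>t x. t \<in> {0<..<T} \<Longrightarrow> x \<in> {0<..<L} \<Longrightarrow>
      ((\<lambda>y. Gterm \<epsilon> L ux m t y * m t y) has_real_derivative (mt t x - \<sigma>\<^sup>2 / 2 * mxx t x)) (at x)"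
    and m_initial: "\<And>x. x \<in> {0..L} \<Longrightarrow> m 0 x = m0 x"
    and u_terminal: "\<And>x. x \<in> {0..L} \<Longrightarrow> u T x = uT x"
    and ux_boundary: "\<And>t. t \<in> {0..T} \<Longrightarrow> ux t 0 = 0 \<and> ux t L = 0"
    and no_flux_boundary: "\<And>t x. t \<in> {0..T} \<Longrightarrow> x \<in> {0, L} \<Longrightarrow>
      \<sigma>\<^sup>2 / 2 * mx t x + Gterm \<epsilon> L ux m t x * m t x = 0"
    and m0_nonneg: "\<And>x. x \<in> {0..L} \<Longrightarrow> 0 \<le> m0 x"
    and m0_mass: "integral {0..L} m0 = 1"
    and uT_nonneg: "\<And>x. x \<in> {0..L} \<Longrightarrow> 0 \<le> uT x"
begin

definition G :: "real \<Rightarrow> real \<Rightarrow> real" where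
  "G t x = Gterm \<epsilon> L ux m t x"

definition flux :: "real \<Rightarrow> real \<Rightarrow> real" where
  "flux t x = \<sigma>\<^sup>2 / 2 * mx t x + G t x * m t x"

definition beta :: "real \<Rightarrow> real" where
  "beta t = bcoef \<epsilon> + ccoef \<epsilon> * integral {0..L} (\<lambda>y. ux t y * m t y)"

lemma G_eq: "G t x = (beta t - ux t x) / 2"
  by (simp add: G_def Gterm_def beta_def)

lemmas product_continuity =
  u_cont[unfolded case_prod_beta'] ut_cont[unfolded case_prod_beta']
  ux_cont[unfolded case_prod_beta'] uxx_cont[unfolded case_prod_beta']
  m_cont[unfolded case_prod_beta'] mt_cont[unfolded case_prod_beta']
  mx_cont[unfolded case_prod_beta'] mxx_cont[unfolded case_prod_beta']

lemma beta_continuous: "continuous_on {0..T} beta"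
  unfolding beta_def
  by (intro continuous_intros continuous_on_integral_slice)
    (simp add: case_prod_beta' continuous_intros product_continuity)

lemma G_continuous: "continuous_on ({0..T} \<times> {0..L}) (\<lambda>p. G (fst p) (snd p))"
proof -
  have "continuous_on ({0..T} \<times> {0..L}) (beta \<circ> fst)"
    by (rule continuous_on_compose) (auto intro!: continuous_intros intro: continuous_on_subset[OF beta_continuous])
  then show ?thesis
    unfolding G_eq by (intro continuous_intros product_continuity) (auto simp: o_def)
qed

lemma flux_continuous: "continuous_on ({0..T} \<times> {0..L}) (\<lambda>p. flux (fst p) (snd p))"
  unfolding flux_def by (intro continuous_intros G_continuous product_continuity)

lemma slice_continuity:
  assumes "t \<in> {0..T}"
  shows "continuous_on {0..L} (u t)" "continuous_on {0..L} (ux t)" "continuous_on {0..L} (uxx t)"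
    "continuous_on {0..L} (m t)" "continuous_on {0..L} (mx t)"
    "continuous_on {0..L} (G t)" "continuous_on {0..L} (flux t)"
  using continuous_on_slice[OF u_cont assms] continuous_on_slice[OF ux_cont assms]
    continuous_on_slice[OF uxx_cont assms] continuous_on_slice[OF m_cont assms]
    continuous_on_slice[OF mx_cont assms]
    continuous_on_slice[OF G_continuous[folded case_prod_beta'] assms]
    continuous_on_slice[OF flux_continuous[folded case_prod_beta'] assms]
  by simp_all

lemma x_derivatives_interior:
  assumes "t \<in> {0..T}" "x \<in> {0<..<L}"
  shows "(u t has_real_derivative ux t x) (at x)" "(ux t has_real_derivative uxx t x) (at x)"
    "(m t has_real_derivative mx t x) (at x)"
  using ux_deriv[of t x] uxx_deriv[of t x] mx_deriv[of t x] assms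
  by (auto simp: at_within_Icc_at)

lemma flux_has_real_derivative:
  assumes "t \<in> {0<..<T}" "x \<in> {0<..<L}"
  shows "(flux t has_real_derivative mt t x) (at x)"
proof -
  have "((\<lambda>y. \<sigma>\<^sup>2 / 2 * mx t y + G t y * m t y) has_real_derivative
      \<sigma>\<^sup>2 / 2 * mxx t x + (mt t x - \<sigma>\<^sup>2 / 2 * mxx t x)) (at x)"
  proof (rule DERIV_add)
    show "((\<lambda>y. \<sigma>\<^sup>2 / 2 * mx t y) has_real_derivative \<sigma>\<^sup>2 / 2 * mxx t x) (at x)"
      by (rule DERIV_cmult) (use mxx_deriv[of t x] assms in \<open>auto simp: at_within_Icc_at\<close>)
    show "((\<lambda>y. G t y * m t y) has_real_derivative mt t x - \<sigma>\<^sup>2 / 2 * mxx t x) (at x)"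
      using fokker_planck[OF assms] by (simp add: G_def)
  qed
  then show ?thesis by (simp add: flux_def[abs_def])
qed

lemma flux_boundary: "t \<in> {0..T} \<Longrightarrow> flux t 0 = 0" "t \<in> {0..T} \<Longrightarrow> flux t L = 0"
  using no_flux_boundary[of t 0] no_flux_boundary[of t L] by (auto simp: flux_def G_def)

lemma ut_eq:
  "t \<in> {0<..<T} \<Longrightarrow> x \<in> {0<..<L} \<Longrightarrow> ut t x = - \<sigma>\<^sup>2 / 2 * uxx t x + r * u t x - (G t x)\<^sup>2"
  using hjb[of t x] by (simp add: G_def algebra_simps)

lemma ux_eq: "ux t x = beta t - 2 * G t x"
  by (simp add: G_eq field_simps)

subsection \<open>Conservation of mass and nonnegativity\<close>

lemma mass_conserved:
  assumes "t \<in> {0..T}"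
  shows "integral {0..L} (m t) = 1"
proof -
  define M where "M s = integral {0..L} (m s)" for s
  have M_deriv: "(M has_real_derivative integral {0..L} (mt s)) (at s within {0..T})"
    if "s \<in> {0..T}" for s
    unfolding M_def[abs_def] by (rule has_real_derivative_integral_slice[OF mt_deriv m_cont mt_cont that])
  have "integral {0..L} (mt s) = 0" if s: "s \<in> {0<..<T}" for s
  proof -
    have "(mt s has_integral (flux s L - flux s 0)) {0..L}"
      using L flux_has_real_derivative[OF s] slice_continuity(7)[of s] s
      by (intro fundamental_theorem_of_calculus_interior)
        (auto simp: has_real_derivative_iff_has_vector_derivative[symmetric])
    then show ?thesis using flux_boundary[of s] s by (simp add: integral_unique)
  qed
  then have M_deriv0: "(M has_real_derivative 0) (at s)" if "s \<in> {0<..<T}" for s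
    using M_deriv[of s] that by (auto simp: at_within_Icc_at)
  have "M t = M 0"
  proof (cases "t = 0")
    case False
    show ?thesis
    proof (rule DERIV_isconst_end[of 0 t M])
      show "0 < t" using False assms by simp
      show "continuous_on {0..t} M"
        using assms by (intro continuous_on_subset[OF DERIV_continuous_on[OF M_deriv]]) auto
      fix s assume "0 < s" "s < t"
      then show "(M has_real_derivative 0) (at s)" using assms M_deriv0 by auto
    qed
  qed simp
  moreover have "M 0 = 1" unfolding M_def using m0_mass by (metis m_initial integral_cong)
  ultimately show ?thesis by (simp add: M_def)
qed

lemma m_has_integral_1:
  assumes "t \<in> {0..T}"
  shows "(m t has_integral 1) {0..L}"
  using integrable_integral[OF integrable_continuous_interval[OF slice_continuity(4)[OF assms]]]
    mass_conserved[OF assms]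
  by simp

definition m_neg_energy :: "real \<Rightarrow> real" where
  "m_neg_energy t = integral {0..L} (\<lambda>x. neg_pow 4 (m t x))"

lemma m_neg_energy_has_real_derivative:
  "t \<in> {0..T} \<Longrightarrow> (m_neg_energy has_real_derivative
    integral {0..L} (\<lambda>x. 4 * neg_pow 3 (m t x) * mt t x)) (at t within {0..T})"
  unfolding m_neg_energy_def[abs_def]
  by (rule has_real_derivative_integral_slice)
    (auto intro!: continuous_intros product_continuity has_real_derivative_neg_pow4 mt_deriv
      simp: case_prod_beta')

lemma m_neg_energy_derivative_eq:
  assumes t: "t \<in> {0<..<T}"
  shows "integral {0..L} (\<lambda>x. 4 * neg_pow 3 (m t x) * mt t x)
    = - integral {0..L} (\<lambda>x. flux t x * (12 * neg_pow 2 (m t x) * mx t x))"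
proof -
  have tt: "t \<in> {0..T}" using t by auto
  have "((\<lambda>x. mt t x * (4 * neg_pow 3 (m t x))) has_integral
      - integral {0..L} (\<lambda>x. flux t x * (12 * neg_pow 2 (m t x) * mx t x))) {0..L}"
  proof (rule integration_by_parts_vanishing_boundary)
    show "((\<lambda>x. 4 * neg_pow 3 (m t x)) has_real_derivative 12 * neg_pow 2 (m t x) * mx t x) (at x)"
      if "x \<in> {0<..<L}" for x
      by (rule has_real_derivative_4_neg_pow3[OF x_derivatives_interior(3)[OF tt that]])
  qed (use L tt flux_has_real_derivative[OF t] flux_boundary slice_continuity[OF tt]
      in \<open>auto intro!: continuous_intros\<close>)
  then show ?thesis by (simp add: integral_unique mult.commute)
qed

lemma m_neg_energy_derivative_le:
  assumes t: "t \<in> {0<..<T}" and K: "\<And>t x. t \<in> {0..T} \<Longrightarrow> x \<in> {0..L} \<Longrightarrow> \<bar>G t x\<bar> \<le> K"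
  shows "integral {0..L} (\<lambda>x. 4 * neg_pow 3 (m t x) * mt t x) \<le> 6 * K\<^sup>2 / \<sigma>\<^sup>2 * m_neg_energy t"
proof -
  have tt: "t \<in> {0..T}" using t by auto
  have "integral {0..L} (\<lambda>x. - (flux t x * (12 * neg_pow 2 (m t x) * mx t x)))
      \<le> integral {0..L} (\<lambda>x. 6 * K\<^sup>2 / \<sigma>\<^sup>2 * neg_pow 4 (m t x))"
    using slice_continuity[OF tt] flux_neg_pow_test_le[OF sig K[OF tt]]
    by (intro integral_le integrable_continuous_interval continuous_intros)
      (auto simp: flux_def)
  then show ?thesis
    using m_neg_energy_derivative_eq[OF t] by (simp add: m_neg_energy_def)
qed

lemma m_nonneg:
  assumes "t \<in> {0..T}" "x \<in> {0..L}"
  shows "0 \<le> m t x"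
proof -
  obtain K where "\<And>p. p \<in> {0..T} \<times> {0..L} \<Longrightarrow> \<bar>G (fst p) (snd p)\<bar> \<le> K"
    using continuous_on_compact_bound[OF compact_Times[OF compact_Icc compact_Icc] G_continuous] by blast
  then have K: "\<And>t x. t \<in> {0..T} \<Longrightarrow> x \<in> {0..L} \<Longrightarrow> \<bar>G t x\<bar> \<le> K"
    by force
  have "m_neg_energy t \<le> exp (6 * K\<^sup>2 / \<sigma>\<^sup>2 * t) * m_neg_energy 0"
  proof (rule gronwall_Icc[OF DERIV_continuous_on[OF m_neg_energy_has_real_derivative] _ _ assms(1)])
    fix s assume s: "s \<in> {0<..<T}"
    show "(m_neg_energy has_real_derivative integral {0..L} (\<lambda>x. 4 * neg_pow 3 (m s x) * mt s x)) (at s)"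
      using m_neg_energy_has_real_derivative[of s] s by (auto simp: at_within_Icc_at)
  qed (use m_neg_energy_derivative_le[OF _ K] in auto)
  moreover have "m_neg_energy 0 = integral {0..L} (\<lambda>x. 0)"
    unfolding m_neg_energy_def
    by (rule integral_cong) (simp add: m_initial m0_nonneg neg_pow_eq_0_iff)
  ultimately show ?thesis
    using nonneg_if_integral_neg_pow_le_0[OF slice_continuity(4)[OF assms(1)] L _ assms(2)]
    by (simp add: m_neg_energy_def)
qed

definition u_neg_energy :: "real \<Rightarrow> real" where
  "u_neg_energy t = integral {0..L} (\<lambda>x. neg_pow 4 (u t x))"

lemma u_neg_energy_has_real_derivative:
  "t \<in> {0..T} \<Longrightarrow> (u_neg_energy has_real_derivative
    integral {0..L} (\<lambda>x. 4 * neg_pow 3 (u t x) * ut t x)) (at t within {0..T})"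
  unfolding u_neg_energy_def[abs_def]
  by (rule has_real_derivative_integral_slice)
    (auto intro!: continuous_intros product_continuity has_real_derivative_neg_pow4 ut_deriv
      simp: case_prod_beta')

lemma uxx_neg_pow3_has_integral:
  assumes "t \<in> {0..T}"
  shows "((\<lambda>x. uxx t x * (4 * neg_pow 3 (u t x))) has_integral
    - integral {0..L} (\<lambda>x. ux t x * (12 * neg_pow 2 (u t x) * ux t x))) {0..L}"
proof (rule integration_by_parts_vanishing_boundary)
  show "((\<lambda>x. 4 * neg_pow 3 (u t x)) has_real_derivative 12 * neg_pow 2 (u t x) * ux t x) (at x)"
    if "x \<in> {0<..<L}" for x
    by (rule has_real_derivative_4_neg_pow3[OF x_derivatives_interior(1)[OF assms that]])
qed (use L ux_boundary[OF assms] x_derivatives_interior(2)[OF assms] slice_continuity[OF assms]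
    in \<open>auto intro!: continuous_intros\<close>)

lemma u_neg_energy_derivative_nonneg:
  assumes t: "t \<in> {0<..<T}"
  shows "0 \<le> integral {0..L} (\<lambda>x. 4 * neg_pow 3 (u t x) * ut t x)"
proof -
  have tt: "t \<in> {0..T}" using t by auto
  note cont = slice_continuity[OF tt]
  define A where "A = integral {0..L} (\<lambda>x. ux t x * (12 * neg_pow 2 (u t x) * ux t x))"
  define B where "B = integral {0..L} (\<lambda>x. 4 * neg_pow 3 (u t x) * (r * u t x - (G t x)\<^sup>2))"
  have "((\<lambda>x. uxx t x * (4 * neg_pow 3 (u t x))) has_integral - A) {0..L}"
    unfolding A_def by (rule uxx_neg_pow3_has_integral[OF tt])
  then have "((\<lambda>x. (- \<sigma>\<^sup>2 / 2) * (uxx t x * (4 * neg_pow 3 (u t x)))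
        + 4 * neg_pow 3 (u t x) * (r * u t x - (G t x)\<^sup>2))
      has_integral ((- \<sigma>\<^sup>2 / 2) * (- A) + B)) {0..L}"
    unfolding B_def using cont
    by (intro has_integral_add has_integral_mult_right integrable_integral
        integrable_continuous_interval continuous_intros)
  then have "((\<lambda>x. (- \<sigma>\<^sup>2 / 2) * (uxx t x * (4 * neg_pow 3 (u t x)))
        + 4 * neg_pow 3 (u t x) * (r * u t x - (G t x)\<^sup>2))
      has_integral (\<sigma>\<^sup>2 / 2 * A + B)) {0..L}"
    by simp
  then have "((\<lambda>x. 4 * neg_pow 3 (u t x) * ut t x) has_integral (\<sigma>\<^sup>2 / 2 * A + B)) {0..L}"
  proof (rule has_integral_cong_interior)
    fix x assume x: "x \<in> {0<..<L}"
    show "4 * neg_pow 3 (u t x) * ut t x = (- \<sigma>\<^sup>2 / 2) * (uxx t x * (4 * neg_pow 3 (u t x)))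
        + 4 * neg_pow 3 (u t x) * (r * u t x - (G t x)\<^sup>2)"
      unfolding ut_eq[OF t x] by (simp add: algebra_simps)
  qed
  moreover have "0 \<le> A"
  proof -
    have "0 \<le> 12 * neg_pow 2 (u t x) * (ux t x * ux t x)" for x
      by (rule mult_nonneg_nonneg) (simp_all add: neg_pow_even_nonneg)
    then have "0 \<le> ux t x * (12 * neg_pow 2 (u t x) * ux t x)" for x
      by (simp only: ac_simps)
    then show ?thesis
      unfolding A_def using cont
      by (intro integral_nonneg integrable_continuous_interval continuous_intros) auto
  qed
  moreover have "0 \<le> B"
    unfolding B_def using cont neg_pow_hjb_source_nonneg[OF r]
    by (intro integral_nonneg integrable_continuous_interval continuous_intros) auto
  ultimately show ?thesis by (simp add: integral_unique)
qed

lemma u_nonneg: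
  assumes "t \<in> {0..T}" "x \<in> {0..L}"
  shows "0 \<le> u t x"
proof -
  have "u_neg_energy t \<le> u_neg_energy T"
  proof (rule DERIV_nonneg_imp_increasing_open[of t T u_neg_energy])
    show "t \<le> T" using assms by simp
    show "continuous_on {t..T} u_neg_energy"
      using assms by (intro continuous_on_subset[OF DERIV_continuous_on[OF u_neg_energy_has_real_derivative]]) auto
    fix s assume "t < s" "s < T"
    then have s: "s \<in> {0<..<T}" using assms by auto
    show "\<exists>y. (u_neg_energy has_real_derivative y) (at s) \<and> 0 \<le> y"
      using u_neg_energy_has_real_derivative[of s] u_neg_energy_derivative_nonneg[OF s] s
      by (auto simp: at_within_Icc_at)
  qed
  moreover have "u_neg_energy T = integral {0..L} (\<lambda>x. 0)"
    unfolding u_neg_energy_def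
    by (rule integral_cong) (simp add: u_terminal uT_nonneg neg_pow_eq_0_iff)
  ultimately show ?thesis
    using nonneg_if_integral_neg_pow_le_0[OF slice_continuity(1)[OF assms(1)] L _ assms(2)]
    by (simp add: u_neg_energy_def)
qed

subsection \<open>The duality estimate\<close>

definition duality :: "real \<Rightarrow> real" where
  "duality t = integral {0..L} (\<lambda>x. u t x * m t x)"

definition duality_deriv :: "real \<Rightarrow> real" where
  "duality_deriv t = integral {0..L} (\<lambda>x. ut t x * m t x + u t x * mt t x)"

definition cost :: "real \<Rightarrow> real" where
  "cost t = integral {0..L} (\<lambda>x. (G t x)\<^sup>2 * m t x)"

definition G_mean :: "real \<Rightarrow> real" where
  "G_mean t = integral {0..L} (\<lambda>x. G t x * m t x)"

lemma duality_has_real_derivative: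
  "t \<in> {0..T} \<Longrightarrow> (duality has_real_derivative duality_deriv t) (at t within {0..T})"
  unfolding duality_def[abs_def] duality_deriv_def
proof (rule has_real_derivative_integral_slice)
  fix s x assume s: "s \<in> {0..T}" and x: "x \<in> {0..L}"
  show "((\<lambda>s. u s x * m s x) has_real_derivative ut s x * m s x + u s x * mt s x) (at s within {0..T})"
    using DERIV_mult[OF ut_deriv[OF s x] mt_deriv[OF s x]] by (simp add: mult.commute)
qed (auto simp: case_prod_beta' intro!: continuous_intros product_continuity)

lemma cost_has_integral:
  assumes "t \<in> {0..T}"
  shows "((\<lambda>x. (G t x)\<^sup>2 * m t x) has_integral cost t) {0..L}"
  unfolding cost_def using slice_continuity[OF assms]
  by (intro integrable_integral integrable_continuous_interval continuous_intros) auto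

lemma G_mean_has_integral:
  assumes "t \<in> {0..T}"
  shows "((\<lambda>x. G t x * m t x) has_integral G_mean t) {0..L}"
  unfolding G_mean_def using slice_continuity[OF assms]
  by (intro integrable_integral integrable_continuous_interval continuous_intros) auto

lemma G_m_ux_has_integral:
  assumes t: "t \<in> {0..T}"
  shows "((\<lambda>x. G t x * m t x * ux t x) has_integral beta t * G_mean t - 2 * cost t) {0..L}"
proof -
  have "((\<lambda>x. beta t * (G t x * m t x) - 2 * ((G t x)\<^sup>2 * m t x)) has_integral
      beta t * G_mean t - 2 * cost t) {0..L}"
    using has_integral_diff[OF has_integral_mult_right[OF G_mean_has_integral[OF t]]
        has_integral_mult_right[OF cost_has_integral[OF t]]] .
  then show ?thesis
  proof (rule has_integral_cong_interior)
    fix x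
    show "G t x * m t x * ux t x = beta t * (G t x * m t x) - 2 * ((G t x)\<^sup>2 * m t x)"
      by (subst ux_eq) (simp add: power2_eq_square algebra_simps)
  qed
qed

lemma u_mt_has_integral:
  assumes t: "t \<in> {0<..<T}"
  shows "((\<lambda>x. u t x * mt t x) has_integral
    \<sigma>\<^sup>2 / 2 * integral {0..L} (\<lambda>x. m t x * uxx t x) - (beta t * G_mean t - 2 * cost t)) {0..L}"
proof -
  have tt: "t \<in> {0..T}" using t by auto
  note cont = slice_continuity[OF tt]
  define P where "P = integral {0..L} (\<lambda>x. flux t x * ux t x)"
  define Q where "Q = integral {0..L} (\<lambda>x. m t x * uxx t x)"
  have mt_u: "((\<lambda>x. mt t x * u t x) has_integral - P) {0..L}"
    unfolding P_def
    by (rule integration_by_parts_vanishing_boundary)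
      (use L flux_has_real_derivative[OF t] x_derivatives_interior[OF tt] flux_boundary[OF tt] cont
        in \<open>auto intro!: continuous_intros\<close>)
  have "((\<lambda>x. mx t x * ux t x) has_integral - Q) {0..L}"
    unfolding Q_def
    by (rule integration_by_parts_vanishing_boundary)
      (use L x_derivatives_interior[OF tt] ux_boundary[OF tt] cont in \<open>auto intro!: continuous_intros\<close>)
  then have "((\<lambda>x. \<sigma>\<^sup>2 / 2 * (mx t x * ux t x) + G t x * m t x * ux t x) has_integral
      \<sigma>\<^sup>2 / 2 * (- Q) + (beta t * G_mean t - 2 * cost t)) {0..L}"
    by (intro has_integral_add has_integral_mult_right G_m_ux_has_integral tt)
  then have "((\<lambda>x. flux t x * ux t x) has_integral
      \<sigma>\<^sup>2 / 2 * (- Q) + (beta t * G_mean t - 2 * cost t)) {0..L}"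
    by (simp add: flux_def algebra_simps)
  then have "P = \<sigma>\<^sup>2 / 2 * (- Q) + (beta t * G_mean t - 2 * cost t)"
    unfolding P_def by (rule integral_unique)
  with mt_u show ?thesis by (simp add: Q_def algebra_simps)
qed

lemma duality_deriv_eq:
  assumes t: "t \<in> {0<..<T}"
  shows "duality_deriv t = r * duality t + cost t - beta t * G_mean t"
proof -
  have tt: "t \<in> {0..T}" using t by auto
  note cont = slice_continuity[OF tt]
  define Q where "Q = integral {0..L} (\<lambda>x. m t x * uxx t x)"
  have "((\<lambda>x. u t x * m t x) has_integral duality t) {0..L}"
    unfolding duality_def using cont
    by (intro integrable_integral integrable_continuous_interval continuous_intros)
  moreover have "((\<lambda>x. m t x * uxx t x) has_integral Q) {0..L}"
    unfolding Q_def using cont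
    by (intro integrable_integral integrable_continuous_interval continuous_intros)
  ultimately have "((\<lambda>x. (- \<sigma>\<^sup>2 / 2) * (m t x * uxx t x) + r * (u t x * m t x)
      - (G t x)\<^sup>2 * m t x + u t x * mt t x) has_integral
      (- \<sigma>\<^sup>2 / 2) * Q + r * duality t - cost t + (\<sigma>\<^sup>2 / 2 * Q - (beta t * G_mean t - 2 * cost t)))
      {0..L}"
    using u_mt_has_integral[OF t] cost_has_integral[OF tt] unfolding Q_def
    by (intro has_integral_add has_integral_diff has_integral_mult_right)
  then have "((\<lambda>x. (- \<sigma>\<^sup>2 / 2) * (m t x * uxx t x) + r * (u t x * m t x)
      - (G t x)\<^sup>2 * m t x + u t x * mt t x) has_integral
      r * duality t + cost t - beta t * G_mean t) {0..L}"
    by (simp add: algebra_simps)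
  then have "((\<lambda>x. ut t x * m t x + u t x * mt t x) has_integral
      r * duality t + cost t - beta t * G_mean t) {0..L}"
  proof (rule has_integral_cong_interior)
    fix x assume x: "x \<in> {0<..<L}"
    show "ut t x * m t x + u t x * mt t x = (- \<sigma>\<^sup>2 / 2) * (m t x * uxx t x)
        + r * (u t x * m t x) - (G t x)\<^sup>2 * m t x + u t x * mt t x"
      unfolding ut_eq[OF t x] by (simp add: algebra_simps)
  qed
  then show ?thesis unfolding duality_deriv_def by (rule integral_unique)
qed

lemma ux_m_has_integral:
  assumes t: "t \<in> {0..T}"
  shows "((\<lambda>x. ux t x * m t x) has_integral beta t - 2 * G_mean t) {0..L}"
proof -
  have "((\<lambda>x. beta t * m t x - 2 * (G t x * m t x)) has_integral beta t * 1 - 2 * G_mean t) {0..L}"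
    using has_integral_diff[OF has_integral_mult_right[OF m_has_integral_1[OF t]]
        has_integral_mult_right[OF G_mean_has_integral[OF t]]] .
  then have "((\<lambda>x. beta t * m t x - 2 * (G t x * m t x)) has_integral beta t - 2 * G_mean t) {0..L}"
    by simp
  then show ?thesis
  proof (rule has_integral_cong_interior)
    fix x
    show "ux t x * m t x = beta t * m t x - 2 * (G t x * m t x)"
      by (subst ux_eq) (simp add: algebra_simps)
  qed
qed

lemma beta_fixed_point:
  assumes t: "t \<in> {0..T}"
  shows "beta t = bcoef \<epsilon> + ccoef \<epsilon> * (beta t - 2 * G_mean t)"
proof -
  have "beta t = bcoef \<epsilon> + ccoef \<epsilon> * integral {0..L} (\<lambda>y. ux t y * m t y)"
    by (rule beta_def)
  then show ?thesis
    by (simp only: integral_unique[OF ux_m_has_integral[OF t]])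
qed

text \<open>Because \<open>bcoef \<epsilon> + ccoef \<epsilon> = 1\<close>, the fixed point relation says
  \<open>bcoef \<epsilon> * beta = bcoef \<epsilon> - 2 * ccoef \<epsilon> * G_mean\<close>.\<close>

lemma beta_G_mean_le:
  assumes t: "t \<in> {0..T}"
  shows "beta t * G_mean t \<le> G_mean t"
proof -
  have bc: "bcoef \<epsilon> + ccoef \<epsilon> = 1" "0 < bcoef \<epsilon>" "0 \<le> ccoef \<epsilon>"
    using eps by (auto simp: bcoef_def ccoef_def add_divide_distrib[symmetric])
  have "beta t * G_mean t * bcoef \<epsilon> = G_mean t * bcoef \<epsilon> - 2 * ccoef \<epsilon> * (G_mean t)\<^sup>2"
    using beta_fixed_point[OF t] bc(1) by algebra
  also have "\<dots> \<le> G_mean t * bcoef \<epsilon>" using bc(3) by simp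
  finally show ?thesis using bc(2) by (simp add: mult_le_cancel_right)
qed

lemma G_mean_le:
  assumes t: "t \<in> {0..T}"
  shows "2 * G_mean t \<le> cost t + 1"
proof -
  have "G_mean t \<le> (cost t + 1) / 2"
  proof (rule has_integral_le[OF G_mean_has_integral[OF t]])
    show "((\<lambda>x. ((G t x)\<^sup>2 * m t x + m t x) / 2) has_integral (cost t + 1) / 2) {0..L}"
      by (intro has_integral_divide has_integral_add cost_has_integral m_has_integral_1 t)
    fix x assume x: "x \<in> {0..L}"
    have "0 \<le> (G t x - 1)\<^sup>2 * m t x / 2" using m_nonneg[OF t x] by simp
    then show "G t x * m t x \<le> ((G t x)\<^sup>2 * m t x + m t x) / 2"
      by (simp add: power2_eq_square algebra_simps)
  qed
  then show ?thesis by simp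
qed

lemma cost_le:
  assumes t: "t \<in> {0<..<T}"
  shows "cost t \<le> 2 * duality_deriv t + 1"
proof -
  have tt: "t \<in> {0..T}" using t by auto
  have "0 \<le> duality t"
    unfolding duality_def using slice_continuity[OF tt] u_nonneg[OF tt] m_nonneg[OF tt]
    by (intro integral_nonneg integrable_continuous_interval continuous_intros) auto
  then have "0 \<le> r * duality t" using r by simp
  then show ?thesis
    using duality_deriv_eq[OF t] beta_G_mean_le[OF tt] G_mean_le[OF tt] by linarith
qed

lemma cost_continuous: "continuous_on {0..T} cost"
  unfolding cost_def[abs_def]
  by (intro continuous_on_integral_slice) (simp add: case_prod_beta' continuous_intros G_continuous product_continuity)

lemma duality_deriv_continuous: "continuous_on {0..T} duality_deriv"
  unfolding duality_deriv_def[abs_def]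
  by (intro continuous_on_integral_slice) (simp add: case_prod_beta' continuous_intros product_continuity)

lemma integral_cost_le:
  assumes U: "\<And>x. x \<in> {0..L} \<Longrightarrow> uT x \<le> U"
  shows "integral {0..T} cost \<le> 2 * U + T"
proof -
  have "(duality_deriv has_integral duality T - duality 0) {0..T}"
    using T duality_has_real_derivative
    by (intro fundamental_theorem_of_calculus) (auto simp: has_real_derivative_iff_has_vector_derivative[symmetric])
  then have "((\<lambda>t. 2 * duality_deriv t + 1) has_integral 2 * (duality T - duality 0) + T) {0..T}"
    using has_integral_const_real[of "1::real" 0 T] T by (intro has_integral_add has_integral_mult_right) auto
  moreover have "cost t \<le> 2 * duality_deriv t + 1" if "t \<in> {0..T}" for t
    by (rule continuous_le_on_Icc_from_Ioo[OF cost_continuous _ T cost_le that])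
      (intro continuous_intros duality_deriv_continuous)
  ultimately have "integral {0..T} cost \<le> 2 * (duality T - duality 0) + T"
    by (rule has_integral_le[OF integrable_integral[OF integrable_continuous_interval[OF cost_continuous]]])
  also have "\<dots> \<le> 2 * U + T"
  proof -
    have "0 \<le> duality 0"
      unfolding duality_def using slice_continuity[of 0] T u_nonneg m_nonneg
      by (intro integral_nonneg integrable_continuous_interval continuous_intros) auto
    moreover have "duality T \<le> U"
    proof -
      have "duality T \<le> integral {0..L} (\<lambda>x. U * m T x)"
        unfolding duality_def using slice_continuity[of T] T u_terminal U m_nonneg[of T]
        by (intro integral_le integrable_continuous_interval continuous_intros) (auto intro: mult_right_mono)
      also have "\<dots> = U"
        using mass_conserved[of T] T by simp
      finally show ?thesis .
    qed
    ultimately show ?thesis by simp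
  qed
  finally show ?thesis .
qed

subsection \<open>The entropy estimate\<close>

definition entropy :: "real \<Rightarrow> real" where
  "entropy t = integral {0..L} (\<lambda>x. entropy_fun (m t x))"

definition entropy_deriv :: "real \<Rightarrow> real" where
  "entropy_deriv t = integral {0..L} (\<lambda>x. ln (m t x + 1) * mt t x)"

definition fisher :: "real \<Rightarrow> real" where
  "fisher t = integral {0..L} (\<lambda>x. (mx t x)\<^sup>2 / (m t x + 1))"

lemma m_plus_one_pos: "t \<in> {0..T} \<Longrightarrow> x \<in> {0..L} \<Longrightarrow> 0 < m t x + 1"
  using m_nonneg[of t x] by simp

lemma m_plus_one_neq_0: "t \<in> {0..T} \<Longrightarrow> x \<in> {0..L} \<Longrightarrow> m t x + 1 \<noteq> 0"
  using m_plus_one_pos[of t x] by simp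

lemma entropy_has_real_derivative:
  "t \<in> {0..T} \<Longrightarrow> (entropy has_real_derivative entropy_deriv t) (at t within {0..T})"
  unfolding entropy_def[abs_def] entropy_deriv_def
proof (rule has_real_derivative_integral_slice)
  fix s x assume "s \<in> {0..T}" "x \<in> {0..L}"
  then show "((\<lambda>s. entropy_fun (m s x)) has_real_derivative ln (m s x + 1) * mt s x) (at s within {0..T})"
    using DERIV_chain2[OF entropy_fun_has_real_derivative mt_deriv] m_plus_one_pos by force
qed (auto simp: case_prod_beta' entropy_fun_def m_plus_one_neq_0
    intro!: continuous_intros product_continuity)

lemma entropy_deriv_continuous: "continuous_on {0..T} entropy_deriv"
  unfolding entropy_deriv_def[abs_def]
  by (intro continuous_on_integral_slice)
    (auto simp: case_prod_beta' m_plus_one_neq_0 intro!: continuous_intros product_continuity)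

lemma fisher_continuous: "continuous_on {0..T} fisher"
  unfolding fisher_def[abs_def]
  by (intro continuous_on_integral_slice)
    (auto simp: case_prod_beta' m_plus_one_neq_0 intro!: continuous_intros product_continuity)

lemma entropy_deriv_le:
  assumes t: "t \<in> {0<..<T}"
  shows "entropy_deriv t \<le> - (\<sigma>\<^sup>2 / 4) * fisher t + cost t / \<sigma>\<^sup>2"
proof -
  have tt: "t \<in> {0..T}" using t by auto
  note cont = slice_continuity[OF tt]
  note pos = m_plus_one_pos[OF tt]
  have "((\<lambda>x. mt t x * ln (m t x + 1)) has_integral
      - integral {0..L} (\<lambda>x. flux t x * (mx t x / (m t x + 1)))) {0..L}"
  proof (rule integration_by_parts_vanishing_boundary)
    show "((\<lambda>x. ln (m t x + 1)) has_real_derivative mx t x / (m t x + 1)) (at x)"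
      if "x \<in> {0<..<L}" for x
      using x_derivatives_interior(3)[OF tt that] pos[of x] that
      by (auto intro!: derivative_eq_intros)
  qed (use L flux_has_real_derivative[OF t] flux_boundary[OF tt] cont
      in \<open>auto simp: m_plus_one_neq_0[OF tt] intro!: continuous_intros\<close>)
  then have "entropy_deriv t = integral {0..L} (\<lambda>x. - (flux t x * (mx t x / (m t x + 1))))"
    unfolding entropy_deriv_def by (simp add: mult.commute integral_unique)
  also have "\<dots> \<le> integral {0..L} (\<lambda>x. - (\<sigma>\<^sup>2 / 4) * ((mx t x)\<^sup>2 / (m t x + 1))
      + (G t x)\<^sup>2 * m t x / \<sigma>\<^sup>2)"
  proof (rule integral_le)
    show "(\<lambda>x. - (flux t x * (mx t x / (m t x + 1)))) integrable_on {0..L}"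
      using cont by (intro integrable_continuous_interval continuous_intros)
        (auto simp: m_plus_one_neq_0[OF tt])
    show "(\<lambda>x. - (\<sigma>\<^sup>2 / 4) * ((mx t x)\<^sup>2 / (m t x + 1)) + (G t x)\<^sup>2 * m t x / \<sigma>\<^sup>2)
        integrable_on {0..L}"
      using cont sig by (intro integrable_continuous_interval continuous_intros)
        (auto simp: m_plus_one_neq_0[OF tt])
    show "- (flux t x * (mx t x / (m t x + 1)))
        \<le> - (\<sigma>\<^sup>2 / 4) * ((mx t x)\<^sup>2 / (m t x + 1)) + (G t x)\<^sup>2 * m t x / \<sigma>\<^sup>2"
      if "x \<in> {0..L}" for x
      using flux_log_test_le[OF sig m_nonneg[OF tt that]] by (simp only: flux_def)
  qed
  also have "\<dots> = - (\<sigma>\<^sup>2 / 4) * fisher t + cost t / \<sigma>\<^sup>2"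
    unfolding fisher_def cost_def using cont
    by (intro integral_unique has_integral_add has_integral_mult_right has_integral_divide
        integrable_integral integrable_continuous_interval continuous_intros)
      (auto simp: m_plus_one_neq_0[OF tt])
  finally show ?thesis .
qed

lemma integral_fisher_le:
  assumes U: "\<And>x. x \<in> {0..L} \<Longrightarrow> uT x \<le> U"
  shows "\<sigma>\<^sup>2 / 4 * integral {0..T} fisher \<le> integral {0..L} (\<lambda>x. entropy_fun (m0 x)) + (2 * U + T) / \<sigma>\<^sup>2"
proof -
  have "(entropy_deriv has_integral entropy T - entropy 0) {0..T}"
    using T entropy_has_real_derivative
    by (intro fundamental_theorem_of_calculus) (auto simp: has_real_derivative_iff_has_vector_derivative[symmetric])
  moreover have "((\<lambda>t. - (\<sigma>\<^sup>2 / 4) * fisher t + cost t / \<sigma>\<^sup>2) has_integral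
      - (\<sigma>\<^sup>2 / 4) * integral {0..T} fisher + integral {0..T} cost / \<sigma>\<^sup>2) {0..T}"
    using fisher_continuous cost_continuous
    by (intro has_integral_add has_integral_mult_right has_integral_divide integrable_integral
        integrable_continuous_interval)
  moreover have "entropy_deriv t \<le> - (\<sigma>\<^sup>2 / 4) * fisher t + cost t / \<sigma>\<^sup>2" if "t \<in> {0..T}" for t
    by (rule continuous_le_on_Icc_from_Ioo[OF entropy_deriv_continuous _ T entropy_deriv_le that])
      (use sig in \<open>auto intro!: continuous_intros fisher_continuous cost_continuous\<close>)
  ultimately have "entropy T - entropy 0 \<le> - (\<sigma>\<^sup>2 / 4) * integral {0..T} fisher + integral {0..T} cost / \<sigma>\<^sup>2"
    by (rule has_integral_le)
  moreover have "0 \<le> entropy T"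
    unfolding entropy_def
  proof (rule integral_nonneg)
    show "(\<lambda>x. entropy_fun (m T x)) integrable_on {0..L}"
      unfolding entropy_fun_def using slice_continuity(4)[of T] T
      by (intro integrable_continuous_interval continuous_intros) (auto simp: m_plus_one_neq_0)
    show "0 \<le> entropy_fun (m T x)" if "x \<in> {0..L}" for x
      using m_nonneg[of T x] T that by (simp add: entropy_fun_nonneg)
  qed
  moreover have "entropy 0 = integral {0..L} (\<lambda>x. entropy_fun (m0 x))"
    unfolding entropy_def by (rule integral_cong) (simp add: m_initial)
  moreover have "integral {0..T} cost / \<sigma>\<^sup>2 \<le> (2 * U + T) / \<sigma>\<^sup>2"
    by (rule divide_right_mono[OF integral_cost_le[OF U] zero_le_power2])
  ultimately show ?thesis by linarith
qed

lemma sigma_sq_sqrt_integral_fisher_le: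
  assumes "\<sigma> \<le> 1" and U: "\<And>x. x \<in> {0..L} \<Longrightarrow> uT x \<le> U"
  shows "\<sigma>\<^sup>2 * sqrt (integral {0..T} fisher)
    \<le> sqrt (4 * \<bar>integral {0..L} (\<lambda>x. entropy_fun (m0 x))\<bar> + 8 * U + 4 * T)"
proof -
  define E0 where "E0 = integral {0..L} (\<lambda>x. entropy_fun (m0 x))"
  have "\<sigma>\<^sup>2 \<le> 1" using assms(1) sig by (simp add: power_le_one)
  then have "\<sigma>\<^sup>2 * E0 \<le> \<bar>E0\<bar>"
    by (metis abs_ge_self abs_mult abs_of_nonneg mult_left_le_one_le order_trans zero_le_power2 abs_ge_zero)
  moreover have "\<sigma>\<^sup>2 * \<sigma>\<^sup>2 * integral {0..T} fisher = 4 * \<sigma>\<^sup>2 * (\<sigma>\<^sup>2 / 4 * integral {0..T} fisher)"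
    by simp
  moreover have "4 * \<sigma>\<^sup>2 * (\<sigma>\<^sup>2 / 4 * integral {0..T} fisher) \<le> 4 * \<sigma>\<^sup>2 * (E0 + (2 * U + T) / \<sigma>\<^sup>2)"
    using integral_fisher_le[OF U] unfolding E0_def by (intro mult_left_mono) auto
  moreover have "4 * \<sigma>\<^sup>2 * (E0 + (2 * U + T) / \<sigma>\<^sup>2) = 4 * (\<sigma>\<^sup>2 * E0) + 8 * U + 4 * T"
    using sig by (simp add: field_simps)
  ultimately have bound: "(\<sigma>\<^sup>2)\<^sup>2 * integral {0..T} fisher \<le> 4 * \<bar>E0\<bar> + 8 * U + 4 * T"
    by (simp add: power2_eq_square)
  have "\<sigma>\<^sup>2 * sqrt (integral {0..T} fisher) = sqrt ((\<sigma>\<^sup>2)\<^sup>2 * integral {0..T} fisher)"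
    by (simp only: real_sqrt_mult real_sqrt_abs abs_of_nonneg zero_le_power2)
  also have "\<dots> \<le> sqrt (4 * \<bar>E0\<bar> + 8 * U + 4 * T)"
    using bound by (rule real_sqrt_le_mono)
  finally show ?thesis unfolding E0_def .
qed

text \<open>Derivatives of \<open>m\<close> in \<open>x\<close> are unique in the interior, which is all the integral sees.\<close>

lemma integral_fisher_eq:
  assumes t: "t \<in> {0..T}"
    and "\<And>x. x \<in> {0..L} \<Longrightarrow> ((\<lambda>y. m t y) has_real_derivative mx' x) (at x within {0..L})"
  shows "integral {0..L} (\<lambda>x. \<bar>mx' x\<bar>\<^sup>2 / (m t x + 1)) = fisher t"
  unfolding fisher_def
proof (rule integral_spike[of "{0, L}"])
  fix x assume x: "x \<in> {0..L} - {0, L}"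
  then have "mx' x = mx t x"
    using assms(2)[of x] x_derivatives_interior(3)[OF t, of x]
    by (auto simp: at_within_Icc_at intro: DERIV_unique)
  then show "(mx t x)\<^sup>2 / (m t x + 1) = \<bar>mx' x\<bar>\<^sup>2 / (m t x + 1)" by simp
qed simp

end

lemma mfg_solution_if_classical_solution:
  assumes "classical_solution L T r \<epsilon> \<sigma> uT m0 u m"
    and "L > 0" "T > 0" "r > 0" "\<epsilon> > 0" "\<sigma> > 0"
    and "\<forall>x\<in>{0..L}. 0 \<le> m0 x" "integral {0..L} m0 = 1" "\<forall>x\<in>{0..L}. 0 \<le> uT x"
  obtains ut ux uxx mt mx mxx where "mfg_solution L T r \<epsilon> \<sigma> u m ut ux uxx mt mx mxx uT m0"
  using assms(1) unfolding classical_solution_def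
proof (elim exE conjE, goal_cases)
  case (1 ut ux uxx mt mx mxx)
  show ?case
    by (rule that[of ut ux uxx mt mx mxx], unfold_locales) (use 1 assms(2-) in auto)
qed

lemma C2gamma_continuous_on: "C2gamma L \<gamma> f \<Longrightarrow> continuous_on {0..L} f"
  unfolding C2gamma_def by (blast intro: DERIV_continuous_on)

theorem lemma4p5:
  fixes L T r \<epsilon> \<gamma> :: real and uT m0 :: "real \<Rightarrow> real"
  assumes "L > 0" and "T > 0" and "r > 0" and "\<epsilon> > 0" and "\<gamma> > 0"
    and "C2gamma L \<gamma> uT" and "C2gamma L \<gamma> m0"
    and "(uT has_real_derivative 0) (at 0 within {0..L})"
    and "(uT has_real_derivative 0) (at L within {0..L})"
    and "m0 0 = 0" and "m0 L = 0"
    and "(m0 has_real_derivative 0) (at 0 within {0..L})"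
    and "(m0 has_real_derivative 0) (at L within {0..L})"
    and "\<forall>x\<in>{0..L}. m0 x \<ge> 0" and "integral {0..L} m0 = 1"
    and "\<forall>x\<in>{0..L}. uT x \<ge> 0"
  shows "\<exists>C. \<forall>\<sigma> u m mx. 0 < \<sigma> \<and> \<sigma> \<le> 1 \<and> classical_solution L T r \<epsilon> \<sigma> uT m0 u m
            \<and> (\<forall>t\<in>{0..T}. \<forall>x\<in>{0..L}.
                  ((\<lambda>y. m t y) has_real_derivative mx t x) (at x within {0..L}))
          \<longrightarrow> \<sigma>\<^sup>2 * sqrt (integral {0..T} (\<lambda>t. integral {0..L}
                  (\<lambda>x. \<bar>mx t x\<bar>\<^sup>2 / (m t x + 1)))) \<le> C"
proof -
  obtain U where "\<And>x. x \<in> {0..L} \<Longrightarrow> \<bar>uT x\<bar> \<le> U"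
    using continuous_on_compact_bound[OF compact_Icc C2gamma_continuous_on[OF assms(6)]] by blast
  then have U: "\<And>x. x \<in> {0..L} \<Longrightarrow> uT x \<le> U" by (blast dest: abs_le_D1)
  define C where
    "C = sqrt (4 * \<bar>integral {0..L} (\<lambda>x. entropy_fun (m0 x))\<bar> + 8 * U + 4 * T)"
  show ?thesis
  proof (intro exI[of _ C] allI impI)
    fix \<sigma> u m mx
    assume h: "0 < \<sigma> \<and> \<sigma> \<le> 1 \<and> classical_solution L T r \<epsilon> \<sigma> uT m0 u m
      \<and> (\<forall>t\<in>{0..T}. \<forall>x\<in>{0..L}. ((\<lambda>y. m t y) has_real_derivative mx t x) (at x within {0..L}))"
    then have "classical_solution L T r \<epsilon> \<sigma> uT m0 u m" "0 < \<sigma>" by auto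
    then obtain ut ux uxx mt mx' mxx where "mfg_solution L T r \<epsilon> \<sigma> u m ut ux uxx mt mx' mxx uT m0"
      by (rule mfg_solution_if_classical_solution[OF _ assms(1-4) _ assms(14-16)])
    then interpret mfg_solution L T r \<epsilon> \<sigma> u m ut ux uxx mt mx' mxx uT m0 .
    have "integral {0..T} (\<lambda>t. integral {0..L} (\<lambda>x. \<bar>mx t x\<bar>\<^sup>2 / (m t x + 1))) = integral {0..T} fisher"
      using h by (intro integral_cong integral_fisher_eq) auto
    moreover have "\<sigma>\<^sup>2 * sqrt (integral {0..T} fisher) \<le> C"
      unfolding C_def by (rule sigma_sq_sqrt_integral_fisher_le) (use h U in auto)
    ultimately show "\<sigma>\<^sup>2 * sqrt (integral {0..T} (\<lambda>t. integral {0..L}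
        (\<lambda>x. \<bar>mx t x\<bar>\<^sup>2 / (m t x + 1)))) \<le> C"
      by simp
  qed
qed

end
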